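(* Let $i=\lambda x.x$ and $\Omega=(\lambda x.x\,x)(\lambda x.x\,x)$. Then $\mathcal{S}k.i \simeq_{\mathrm{ctx}} (\mathcal{S}k.i)\,\Omega$, but $\mathcal{S}k.i \not\sim (\mathcal{S}k.i)\,\Omega$.
   Context: The calculus $\lambda_{\mathcal S}$. Terms: $t ::= x \mid \lambda x.t \mid t\,t \mid \mathcal{S}k.t \mid \langle t\rangle$ (shift and reset); values: $v ::= \lambda x.t \mid x$. $\lambda x.t$ binds $x$, $\mathcal{S}k.t$ binds $k$; terms up to $\alpha$-conversion; capture-avoiding substitution $t\{v/x\}$. Pure contexts $F ::= [\,] \mid v\,F \mid F\,t$; evaluation contexts $E ::= [\,] \mid v\,E \mid E\,t \mid \langle E\rangle$; general contexts $C ::= [\,] \mid \lambda x.C \mid t\,C \mid C\,t \mid \mathcal{S}k.C \mid \langle C\rangle$. Reduction: $E[(\lambda x.t)\,v] \to E[t\{v/x\}]$; $E[\langle F[\mathcal{S}k.t]\rangle] \to E[\langle t\{\lambda x.\langle F[x]\rangle/k\}\rangle]$ ($x\notin\mathrm{fv}(F)$); $E[\langle v\rangle]\to E[v]$. $t\Downarrow t'$ iff $t\to^*t'$ and $t'$ irreducible. Stuck: not a value and irreducible; normal form: value or stuck; control stuck: $F[\mathcal{S}k.t]$; open stuck: $E[x\,v]$. Fresh: not free in the terms/contexts considered. $t_0\simeq_{\mathrm{ctx}}t_1$ iff for every context $C$ with $C[t_0],C[t_1]$ closed: $C[t_0]\Downarrow$ a value implies $C[t_1]\Downarrow$ a value;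 $C[t_0]\Downarrow$ a control stuck term implies $C[t_1]\Downarrow$ a control stuck term; and conversely. Normal form bisimilarity $\sim$: for a relation $\mathcal R$ on terms, extend to evaluation contexts by $E_0\mathrel{\mathcal R}E_1$ iff either $E_0=E_0'[\langle F_0\rangle]$, $E_1=E_1'[\langle F_1\rangle]$ ($F_i$ pure) with $E_0'[x]\mathrel{\mathcal R}E_1'[x]$ and $\langle F_0[x]\rangle\mathrel{\mathcal R}\langle F_1[x]\rangle$ ($x$ fresh), or $E_0=F_0$, $E_1=F_1$ pure with $F_0[x]\mathrel{\mathcal R}F_1[x]$ ($x$ fresh). $v\mathbin{@}y$ is $x\,y$ if $v=x$, $t\{y/x\}$ if $v=\lambda x.t$. $\mathcal R^{\mathrm{nf}}$: $v_0\mathrel{\mathcal R^{\mathrm{nf}}}v_1$ if $v_0\mathbin{@}x\mathrel{\mathcal R}v_1\mathbin{@}x$ ($x$ fresh); $F_0[\mathcal{S}k.t_0]\mathrel{\mathcal R^{\mathrm{nf}}}F_1[\mathcal{S}k.t_1]$ if $F_0\mathrel{\mathcal R}F_1$ and $\langle t_0\rangle\mathrel{\mathcal R}\langle t_1\rangle$; $E_0[x\,v_0]\mathrel{\mathcal R^{\mathrm{nf}}}E_1[x\,v_1]$ if $E_0\mathrel{\mathcal R}E_1$ and $v_0\mathrel{\mathcal R^{\mathrm{nf}}}v_1$. $\mathcal R$ is a normal form simulation if $t_0\mathrel{\mathcal R}t_1$, $t_0\Downarrow t_0'$ imply $t_1\Downarrow t_1'$ with $t_0'\mathrel{\mathcal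 R^{\mathrm{nf}}}t_1'$; a bisimulation if $\mathcal R$ and $\mathcal R^{-1}$ are simulations; $\sim$ is the largest one. *)

theory Defs
  imports Main
begin

text \<open>Terms up to alpha-conversion are represented with de Bruijn indices.
  Lam binds x (index 0 in its body), Shift binds k (index 0 in its body),
  Reset is the delimiter.\<close>

datatype trm = Var nat | Lam trm | App trm trm | Shift trm | Reset trm

fun is_val :: "trm \<Rightarrow> bool" where
  "is_val (Var _) = True"
| "is_val (Lam _) = True"
| "is_val _ = False"

fun lift :: "nat \<Rightarrow> trm \<Rightarrow> trm" where
  "lift k (Var i) = (if i < k then Var i else Var (Suc i))"
| "lift k (Lam t) = Lam (lift (Suc k) t)"
| "lift k (App t u) = App (lift k t) (lift k u)"
| "lift k (Shift t) = Shift (lift (Suc k) t)"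
| "lift k (Reset t) = Reset (lift k t)"

fun subst :: "trm \<Rightarrow> nat \<Rightarrow> trm \<Rightarrow> trm" where
  "subst (Var i) k v = (if i = k then v else if k < i then Var (i - 1) else Var i)"
| "subst (Lam t) k v = Lam (subst t (Suc k) (lift 0 v))"
| "subst (App t u) k v = App (subst t k v) (subst u k v)"
| "subst (Shift t) k v = Shift (subst t (Suc k) (lift 0 v))"
| "subst (Reset t) k v = Reset (subst t k v)"

fun fvs :: "trm \<Rightarrow> nat set" where
  "fvs (Var i) = {i}"
| "fvs (Lam t) = (\<lambda>n. n - 1) ` (fvs t - {0})"
| "fvs (App t u) = fvs t \<union> fvs u"
| "fvs (Shift t) = (\<lambda>n. n - 1) ` (fvs t - {0})"
| "fvs (Reset t) = fvs t"

definition closed :: "trm \<Rightarrow> bool" where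
  "closed t \<longleftrightarrow> fvs t = {}"

text \<open>Evaluation contexts E ::= [] | v E | E t | <E>; pure contexts are
  evaluation contexts without Reset.\<close>
datatype ectx = EHole | EArgV trm ectx | EFun ectx trm | EReset ectx

fun plugE :: "ectx \<Rightarrow> trm \<Rightarrow> trm" where
  "plugE EHole t = t"
| "plugE (EArgV v E) t = App v (plugE E t)"
| "plugE (EFun E u) t = App (plugE E t) u"
| "plugE (EReset E) t = Reset (plugE E t)"

fun ectx_ok :: "ectx \<Rightarrow> bool" where
  "ectx_ok EHole = True"
| "ectx_ok (EArgV v E) = (is_val v \<and> ectx_ok E)"
| "ectx_ok (EFun E u) = ectx_ok E"
| "ectx_ok (EReset E) = ectx_ok E"

fun pure :: "ectx \<Rightarrow> bool" where
  "pure EHole = True"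
| "pure (EArgV v E) = (is_val v \<and> pure E)"
| "pure (EFun E u) = pure E"
| "pure (EReset E) = False"

fun ecomp :: "ectx \<Rightarrow> ectx \<Rightarrow> ectx" where
  "ecomp EHole E2 = E2"
| "ecomp (EArgV v E) E2 = EArgV v (ecomp E E2)"
| "ecomp (EFun E u) E2 = EFun (ecomp E E2) u"
| "ecomp (EReset E) E2 = EReset (ecomp E E2)"

fun liftE :: "ectx \<Rightarrow> ectx" where
  "liftE EHole = EHole"
| "liftE (EArgV v E) = EArgV (lift 0 v) (liftE E)"
| "liftE (EFun E u) = EFun (liftE E) (lift 0 u)"
| "liftE (EReset E) = EReset (liftE E)"

text \<open>General contexts (plugging may capture variables).\<close>
datatype cctx = CHole | CLam cctx | CAppL trm cctx | CAppR cctx trm | CShift cctx | CReset cctx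

fun plugC :: "cctx \<Rightarrow> trm \<Rightarrow> trm" where
  "plugC CHole t = t"
| "plugC (CLam C) t = Lam (plugC C t)"
| "plugC (CAppL u C) t = App u (plugC C t)"
| "plugC (CAppR C u) t = App (plugC C t) u"
| "plugC (CShift C) t = Shift (plugC C t)"
| "plugC (CReset C) t = Reset (plugC C t)"

inductive red :: "trm \<Rightarrow> trm \<Rightarrow> bool" where
  beta: "\<lbrakk>ectx_ok E; is_val v\<rbrakk> \<Longrightarrow>
     red (plugE E (App (Lam t) v)) (plugE E (subst t 0 v))"
| shift: "\<lbrakk>ectx_ok E; pure F\<rbrakk> \<Longrightarrow>
     red (plugE E (Reset (plugE F (Shift t))))
         (plugE E (Reset (subst t 0 (Lam (Reset (plugE (liftE F) (Var 0)))))))"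
| reset: "\<lbrakk>ectx_ok E; is_val v\<rbrakk> \<Longrightarrow>
     red (plugE E (Reset v)) (plugE E v)"

definition irreducible :: "trm \<Rightarrow> bool" where
  "irreducible t \<longleftrightarrow> (\<nexists>u. red t u)"

definition evals :: "trm \<Rightarrow> trm \<Rightarrow> bool" where
  "evals t t' \<longleftrightarrow> red\<^sup>*\<^sup>* t t' \<and> irreducible t'"

definition control_stuck :: "trm \<Rightarrow> bool" where
  "control_stuck t \<longleftrightarrow> (\<exists>F s. pure F \<and> t = plugE F (Shift s))"

definition ctx_equiv :: "trm \<Rightarrow> trm \<Rightarrow> bool" where
  "ctx_equiv t0 t1 \<longleftrightarrow>
    (\<forall>C. closed (plugC C t0) \<and> closed (plugC C t1) \<longrightarrow>
      ((\<exists>v. evals (plugC C t0) v \<and> is_val v) \<longleftrightarrow> (\<exists>v. evals (plugC C t1) v \<and> is_val v)) \<and>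
      ((\<exists>u. evals (plugC C t0) u \<and> control_stuck u) \<longleftrightarrow>
       (\<exists>u. evals (plugC C t1) u \<and> control_stuck u)))"

text \<open>Fresh variables: a term/context is lifted by one and the fresh variable is index 0.\<close>

definition ctx_rel :: "(trm \<Rightarrow> trm \<Rightarrow> bool) \<Rightarrow> ectx \<Rightarrow> ectx \<Rightarrow> bool" where
  "ctx_rel R E0 E1 \<longleftrightarrow>
    (\<exists>E0' F0 E1' F1. pure F0 \<and> pure F1 \<and>
        E0 = ecomp E0' (EReset F0) \<and> E1 = ecomp E1' (EReset F1) \<and>
        R (plugE (liftE E0') (Var 0)) (plugE (liftE E1') (Var 0)) \<and>
        R (Reset (plugE (liftE F0) (Var 0))) (Reset (plugE (liftE F1) (Var 0))))
    \<or> (pure E0 \<and> pure E1 \<and> R (plugE (liftE E0) (Var 0)) (plugE (liftE E1) (Var 0)))"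

text \<open>v @ y for a fresh y (after lifting v, y is index 0).\<close>
fun app_fresh :: "trm \<Rightarrow> trm" where
  "app_fresh (Var n) = App (Var (Suc n)) (Var 0)"
| "app_fresh (Lam t) = t"
| "app_fresh t = t"

definition nf_rel :: "(trm \<Rightarrow> trm \<Rightarrow> bool) \<Rightarrow> trm \<Rightarrow> trm \<Rightarrow> bool" where
  "nf_rel R t0 t1 \<longleftrightarrow>
    (is_val t0 \<and> is_val t1 \<and> R (app_fresh t0) (app_fresh t1))
  \<or> (\<exists>F0 F1 s0 s1. pure F0 \<and> pure F1 \<and>
       t0 = plugE F0 (Shift s0) \<and> t1 = plugE F1 (Shift s1) \<and>
       ctx_rel R F0 F1 \<and> R (Reset s0) (Reset s1))
  \<or> (\<exists>E0 E1 x v0 v1. ectx_ok E0 \<and> ectx_ok E1 \<and> is_val v0 \<and> is_val v1 \<and>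
       t0 = plugE E0 (App (Var x) v0) \<and> t1 = plugE E1 (App (Var x) v1) \<and>
       ctx_rel R E0 E1 \<and> R (app_fresh v0) (app_fresh v1))"

definition nf_sim :: "(trm \<Rightarrow> trm \<Rightarrow> bool) \<Rightarrow> bool" where
  "nf_sim R \<longleftrightarrow> (\<forall>t0 t1 t0'. R t0 t1 \<longrightarrow> evals t0 t0' \<longrightarrow>
                    (\<exists>t1'. evals t1 t1' \<and> nf_rel R t0' t1'))"

definition nf_bisim :: "(trm \<Rightarrow> trm \<Rightarrow> bool) \<Rightarrow> bool" where
  "nf_bisim R \<longleftrightarrow> nf_sim R \<and> nf_sim R\<inverse>\<inverse>"

definition nf_bisimilar :: "trm \<Rightarrow> trm \<Rightarrow> bool" where
  "nf_bisimilar t0 t1 \<longleftrightarrow> (\<exists>R. nf_bisim R \<and> R t0 t1)"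

definition I_trm :: trm where "I_trm = Lam (Var 0)"
definition Omega :: trm where
  "Omega = App (Lam (App (Var 0) (Var 0))) (Lam (App (Var 0) (Var 0)))"

end

theory Submission
  imports Defs
begin

text \<open>The shift \<open>\<S>k.i\<close> discards its delimited context: \<open>\<langle>F[\<S>k.i]\<rangle> \<rightarrow> \<langle>i\<rangle>\<close> for every pure
  \<open>F\<close>, and \<open>(\<S>k.i) t\<close> merely extends that context by \<open>[ ] t\<close>. So the compatible closure
  of the pairs \<open>(\<S>k.i, (\<S>k.i) t)\<close> is a lock-step bisimulation for reduction that preserves
  values and control-stuck terms, which yields contextual equivalence for every \<open>t\<close>.
  Normal form bisimilarity instead compares the captured contexts \<open>[ ]\<close> and \<open>[ ] \<Omega>\<close>
  directly, by plugging a fresh variable \<open>x\<close>: but \<open>x\<close> is a value while \<open>x \<Omega>\<close> diverges.\<close>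

inductive contr :: "trm \<Rightarrow> trm \<Rightarrow> bool" where
  beta: "is_val v \<Longrightarrow> contr (App (Lam t) v) (subst t 0 v)"
| shift: "pure F \<Longrightarrow>
    contr (Reset (plugE F (Shift t))) (Reset (subst t 0 (Lam (Reset (plugE (liftE F) (Var 0))))))"
| reset: "is_val v \<Longrightarrow> contr (Reset v) v"

lemma red_iff_plugE_contr:
  "red t t' \<longleftrightarrow> (\<exists>E r r'. ectx_ok E \<and> contr r r' \<and> t = plugE E r \<and> t' = plugE E r')"
  by (auto elim!: red.cases contr.cases intro: red.intros contr.intros)

lemma plugE_eq_Lam: "plugE E r = Lam s \<Longrightarrow> E = EHole \<and> r = Lam s"
  by (cases E) auto

lemma plugE_eq_Var: "plugE E r = Var x \<Longrightarrow> E = EHole \<and> r = Var x"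
  by (cases E) auto

lemma plugE_eq_Shift: "plugE E r = Shift s \<Longrightarrow> E = EHole \<and> r = Shift s"
  by (cases E) auto

lemma plugE_ecomp: "plugE (ecomp E E') t = plugE E (plugE E' t)"
  by (induction E) auto

lemma pure_ecomp: "pure (ecomp E E') \<longleftrightarrow> pure E \<and> pure E'"
  by (induction E) auto

lemma contr_not_Shift: "contr r r' \<Longrightarrow> r \<noteq> Shift s"
  by (auto elim: contr.cases)

lemma lift_I_trm [simp]: "lift k I_trm = I_trm"
  by (simp add: I_trm_def)

lemma subst_I_trm [simp]: "subst I_trm k v = I_trm"
  by (simp add: I_trm_def)

lemma lift_Omega [simp]: "lift k Omega = Omega"
  by (simp add: Omega_def)

inductive shift_id_rel :: "trm \<Rightarrow> trm \<Rightarrow> bool" where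
  shift_id_app: "shift_id_rel (Shift I_trm) (App (Shift I_trm) u)"
| var: "shift_id_rel (Var i) (Var i)"
| lam: "shift_id_rel t t' \<Longrightarrow> shift_id_rel (Lam t) (Lam t')"
| app: "shift_id_rel t t' \<Longrightarrow> shift_id_rel u u' \<Longrightarrow> shift_id_rel (App t u) (App t' u')"
| shift: "shift_id_rel t t' \<Longrightarrow> shift_id_rel (Shift t) (Shift t')"
| reset: "shift_id_rel t t' \<Longrightarrow> shift_id_rel (Reset t) (Reset t')"

inductive_cases shift_id_rel_AppE: "shift_id_rel (App t u) w"
inductive_cases shift_id_rel_LamE: "shift_id_rel (Lam t) w"
inductive_cases shift_id_rel_ResetE: "shift_id_rel (Reset t) w"
inductive_cases shift_id_rel_ShiftE: "shift_id_rel (Shift t) w"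
inductive_cases shift_id_rel_App_rightE: "shift_id_rel w (App t u)"
inductive_cases shift_id_rel_Lam_rightE: "shift_id_rel w (Lam t)"
inductive_cases shift_id_rel_Reset_rightE: "shift_id_rel w (Reset t)"
inductive_cases shift_id_rel_Shift_rightE: "shift_id_rel w (Shift t)"

lemma shift_id_rel_refl: "shift_id_rel t t"
  by (induction t) (auto intro: shift_id_rel.intros)

lemma shift_id_rel_lift: "shift_id_rel t t' \<Longrightarrow> shift_id_rel (lift k t) (lift k t')"
  by (induction arbitrary: k rule: shift_id_rel.induct) (auto intro: shift_id_rel.intros)

lemma shift_id_rel_subst:
  "shift_id_rel t t' \<Longrightarrow> shift_id_rel v v' \<Longrightarrow> shift_id_rel (subst t k v) (subst t' k v')"
  by (induction arbitrary: k v v' rule: shift_id_rel.induct)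
     (auto intro!: shift_id_rel.intros simp: shift_id_rel_lift)

lemma shift_id_rel_is_val: "shift_id_rel v v' \<Longrightarrow> is_val v \<longleftrightarrow> is_val v'"
  by (induction rule: shift_id_rel.induct) auto

inductive shift_id_rel_ectx :: "ectx \<Rightarrow> ectx \<Rightarrow> bool" where
  "shift_id_rel_ectx EHole EHole"
| "shift_id_rel v v' \<Longrightarrow> shift_id_rel_ectx E E' \<Longrightarrow> shift_id_rel_ectx (EArgV v E) (EArgV v' E')"
| "shift_id_rel_ectx E E' \<Longrightarrow> shift_id_rel u u' \<Longrightarrow> shift_id_rel_ectx (EFun E u) (EFun E' u')"
| "shift_id_rel_ectx E E' \<Longrightarrow> shift_id_rel_ectx (EReset E) (EReset E')"

lemma shift_id_rel_plugE:
  "shift_id_rel_ectx E E' \<Longrightarrow> shift_id_rel t t' \<Longrightarrow> shift_id_rel (plugE E t) (plugE E' t')"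
  by (induction rule: shift_id_rel_ectx.induct) (auto intro: shift_id_rel.intros)

lemma shift_id_rel_liftE: "shift_id_rel_ectx E E' \<Longrightarrow> shift_id_rel_ectx (liftE E) (liftE E')"
  by (induction rule: shift_id_rel_ectx.induct)
     (auto intro: shift_id_rel_ectx.intros shift_id_rel_lift)

lemma shift_id_rel_ectx_ok: "shift_id_rel_ectx E E' \<Longrightarrow> ectx_ok E \<longleftrightarrow> ectx_ok E'"
  by (induction rule: shift_id_rel_ectx.induct) (auto dest: shift_id_rel_is_val)

lemma shift_id_rel_pure: "shift_id_rel_ectx E E' \<Longrightarrow> pure E \<longleftrightarrow> pure E'"
  by (induction rule: shift_id_rel_ectx.induct) (auto dest: shift_id_rel_is_val)

lemma shift_id_rel_continuation:
  "shift_id_rel_ectx F F' \<Longrightarrow>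
    shift_id_rel (Lam (Reset (plugE (liftE F) (Var 0)))) (Lam (Reset (plugE (liftE F') (Var 0))))"
  by (intro shift_id_rel.intros shift_id_rel_plugE shift_id_rel_liftE)

lemma shift_id_rel_plugE_leftD:
  "shift_id_rel (plugE E r) u \<Longrightarrow>
    \<exists>E' r'. u = plugE E' r' \<and> shift_id_rel_ectx E E' \<and> shift_id_rel r r'"
proof (induction E arbitrary: u)
  case EHole
  then show ?case by (metis shift_id_rel_ectx.intros(1) plugE.simps(1))
next
  case (EArgV v E)
  then obtain v' w where "u = App v' w" "shift_id_rel v v'" "shift_id_rel (plugE E r) w"
    by (auto elim: shift_id_rel_AppE)
  with EArgV.IH show ?case by (metis shift_id_rel_ectx.intros(2) plugE.simps(2))
next
  case (EFun E t)
  then obtain t' w where "u = App w t'" "shift_id_rel t t'" "shift_id_rel (plugE E r) w"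
    by (auto elim: shift_id_rel_AppE)
  with EFun.IH show ?case by (metis shift_id_rel_ectx.intros(3) plugE.simps(3))
next
  case (EReset E)
  then obtain w where "u = Reset w" "shift_id_rel (plugE E r) w"
    by (auto elim: shift_id_rel_ResetE)
  with EReset.IH show ?case by (metis shift_id_rel_ectx.intros(4) plugE.simps(4))
qed

lemma shift_id_rel_plugE_rightD:
  assumes "ectx_ok E'" "\<And>s. r' \<noteq> Shift s" "shift_id_rel t (plugE E' r')"
  shows "\<exists>E r. t = plugE E r \<and> shift_id_rel_ectx E E' \<and> shift_id_rel r r'"
  using assms
proof (induction E' arbitrary: t)
  case EHole
  then show ?case by (metis shift_id_rel_ectx.intros(1) plugE.simps(1))
next
  case (EArgV v' E')
  then obtain v w where "t = App v w" "shift_id_rel v v'" "shift_id_rel w (plugE E' r')"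
    by (auto elim: shift_id_rel_App_rightE)
  with EArgV show ?case by (metis shift_id_rel_ectx.intros(2) plugE.simps(2) ectx_ok.simps(2))
next
  case (EFun E' t')
  from EFun.prems(3)[simplified] obtain t0 w
    where "t = App w t0" "shift_id_rel t0 t'" "shift_id_rel w (plugE E' r')"
  proof (rule shift_id_rel_App_rightE)
    assume "plugE E' r' = Shift I_trm"
    then show ?thesis using EFun.prems(2) by (metis plugE_eq_Shift plugE.simps(1))
  qed
  with EFun show ?case by (metis shift_id_rel_ectx.intros(3) plugE.simps(3) ectx_ok.simps(3))
next
  case (EReset E')
  then obtain w where "t = Reset w" "shift_id_rel w (plugE E' r')"
    by (auto elim: shift_id_rel_Reset_rightE)
  with EReset show ?case by (metis shift_id_rel_ectx.intros(4) plugE.simps(4) ectx_ok.simps(4))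
qed

text \<open>The second case arises when the pure context on the right has absorbed the argument
  of \<open>(\<S>k.i) t\<close>.\<close>

lemma shift_id_rel_pure_shift_rightD:
  assumes "pure F'" "shift_id_rel w (plugE F' (Shift s'))"
  shows "(\<exists>F s. w = plugE F (Shift s) \<and> shift_id_rel_ectx F F' \<and> shift_id_rel s s')
       \<or> (\<exists>F. pure F \<and> w = plugE F (Shift I_trm) \<and> s' = I_trm)"
  using assms
proof (induction F' arbitrary: w)
  case EHole
  then obtain s where "w = Shift s" "shift_id_rel s s'"
    by (auto elim: shift_id_rel_Shift_rightE)
  then show ?case by (metis shift_id_rel_ectx.intros(1) plugE.simps(1))
next
  case (EArgV v' F')
  from EArgV.prems(2)[simplified] obtain v x
    where w: "w = App v x" "shift_id_rel v v'" "shift_id_rel x (plugE F' (Shift s'))"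
    using EArgV.prems(1) by (elim shift_id_rel_App_rightE) auto
  have "is_val v"
    using w(2) EArgV.prems(1) shift_id_rel_is_val by auto
  from EArgV.IH[OF _ w(3)] EArgV.prems(1) have
    "(\<exists>F s. x = plugE F (Shift s) \<and> shift_id_rel_ectx F F' \<and> shift_id_rel s s')
     \<or> (\<exists>F. pure F \<and> x = plugE F (Shift I_trm) \<and> s' = I_trm)" by simp
  then show ?case
  proof (elim disjE exE conjE)
    fix F s assume "x = plugE F (Shift s)" "shift_id_rel_ectx F F'" "shift_id_rel s s'"
    then show ?case
      using w(1,2) by (metis shift_id_rel_ectx.intros(2) plugE.simps(2))
  next
    fix F assume "pure F" "x = plugE F (Shift I_trm)" "s' = I_trm"
    then show ?case
      using w(1) \<open>is_val v\<close> by (metis plugE.simps(2) pure.simps(2))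
  qed
next
  case (EFun F' t')
  from EFun.prems(2)[simplified] show ?case
  proof (rule shift_id_rel_App_rightE)
    assume "w = Shift I_trm" "plugE F' (Shift s') = Shift I_trm"
    then show ?thesis
      by (metis plugE_eq_Shift plugE.simps(1) pure.simps(1) trm.inject(4))
  next
    fix x t0
    assume w: "w = App x t0" "shift_id_rel t0 t'" "shift_id_rel x (plugE F' (Shift s'))"
    from EFun.IH[OF _ w(3)] EFun.prems(1) have
      "(\<exists>F s. x = plugE F (Shift s) \<and> shift_id_rel_ectx F F' \<and> shift_id_rel s s')
       \<or> (\<exists>F. pure F \<and> x = plugE F (Shift I_trm) \<and> s' = I_trm)" by simp
    then show ?thesis
    proof (elim disjE exE conjE)
      fix F s assume "x = plugE F (Shift s)" "shift_id_rel_ectx F F'" "shift_id_rel s s'"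
      then show ?thesis
        using w(1,2) by (metis shift_id_rel_ectx.intros(3) plugE.simps(3))
    next
      fix F assume "pure F" "x = plugE F (Shift I_trm)" "s' = I_trm"
      then show ?thesis
        using w(1) by (metis plugE.simps(3) pure.simps(3))
    qed
  qed
qed simp

lemma contr_simulation:
  assumes "contr r r'" "shift_id_rel r u"
  shows "\<exists>u'. contr u u' \<and> shift_id_rel r' u'"
  using assms(1)
proof cases
  case (beta v s)
  with assms(2) obtain s' v' where "u = App (Lam s') v'" "shift_id_rel s s'" "shift_id_rel v v'"
    by (auto elim!: shift_id_rel_AppE shift_id_rel_LamE)
  with beta show ?thesis
    by (metis contr.beta shift_id_rel_is_val shift_id_rel_subst)
next
  case (shift F s)
  with assms(2) obtain w where w: "u = Reset w" "shift_id_rel (plugE F (Shift s)) w"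
    by (auto elim: shift_id_rel_ResetE)
  then obtain F' r'' where F': "w = plugE F' r''" "shift_id_rel_ectx F F'" "shift_id_rel (Shift s) r''"
    using shift_id_rel_plugE_leftD by blast
  have "pure F'"
    using F'(2) shift(3) shift_id_rel_pure by blast
  from F'(3) show ?thesis
  proof (rule shift_id_rel_ShiftE)
    fix t assume "s = I_trm" "r'' = App (Shift I_trm) t"
    then have "u = Reset (plugE (ecomp F' (EFun EHole t)) (Shift I_trm))" and "r' = Reset I_trm"
      using shift w F' by (simp_all add: plugE_ecomp)
    moreover have "pure (ecomp F' (EFun EHole t))"
      using \<open>pure F'\<close> by (simp add: pure_ecomp)
    ultimately show ?thesis
      using contr.shift shift_id_rel_refl by fastforce
  next
    fix s'' assume "r'' = Shift s''" "shift_id_rel s s''"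
    moreover have "shift_id_rel (Lam (Reset (plugE (liftE F) (Var 0))))
                                (Lam (Reset (plugE (liftE F') (Var 0))))"
      using F'(2) by (rule shift_id_rel_continuation)
    ultimately show ?thesis
      using contr.shift[OF \<open>pure F'\<close>] shift w F'(1)
      by (metis shift_id_rel.reset shift_id_rel_subst)
  qed
next
  case reset
  with assms(2) obtain v' where "u = Reset v'" "shift_id_rel r' v'"
    by (auto elim: shift_id_rel_ResetE)
  with reset show ?thesis
    by (metis contr.reset shift_id_rel_is_val)
qed

lemma contr_simulation_rev:
  assumes "contr u u'" "shift_id_rel t u"
  shows "\<exists>t'. contr t t' \<and> shift_id_rel t' u'"
  using assms(1)
proof cases
  case (beta v' s')
  with assms(2) obtain s v where "t = App (Lam s) v" "shift_id_rel s s'" "shift_id_rel v v'"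
    by (auto elim!: shift_id_rel_App_rightE shift_id_rel_Lam_rightE)
  with beta show ?thesis
    by (metis contr.beta shift_id_rel_is_val shift_id_rel_subst)
next
  case (shift F' s')
  with assms(2) obtain w where w: "t = Reset w" "shift_id_rel w (plugE F' (Shift s'))"
    by (auto elim: shift_id_rel_Reset_rightE)
  from shift_id_rel_pure_shift_rightD[OF \<open>pure F'\<close> w(2)] show ?thesis
  proof (elim disjE exE conjE)
    fix F s assume F: "w = plugE F (Shift s)" "shift_id_rel_ectx F F'" "shift_id_rel s s'"
    then have "pure F"
      using shift(3) shift_id_rel_pure by blast
    moreover have "shift_id_rel (Lam (Reset (plugE (liftE F) (Var 0))))
                                (Lam (Reset (plugE (liftE F') (Var 0))))"
      using F(2) by (rule shift_id_rel_continuation)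
    ultimately show ?thesis
      using contr.shift shift w(1) F(1,3)
      by (metis shift_id_rel.reset shift_id_rel_subst)
  next
    fix F assume "pure F" "w = plugE F (Shift I_trm)" "s' = I_trm"
    then show ?thesis
      using contr.shift[of F I_trm] shift w(1) shift_id_rel_refl by fastforce
  qed
next
  case reset
  with assms(2) obtain v where "t = Reset v" "shift_id_rel v u'"
    by (auto elim: shift_id_rel_Reset_rightE)
  with reset show ?thesis
    by (metis contr.reset shift_id_rel_is_val)
qed

lemma red_simulation:
  assumes "red t t'" "shift_id_rel t u"
  shows "\<exists>u'. red u u' \<and> shift_id_rel t' u'"
proof -
  obtain E r r' where red: "ectx_ok E" "contr r r'" "t = plugE E r" "t' = plugE E r'"
    using assms(1) red_iff_plugE_contr by blast
  then obtain E' w where w: "u = plugE E' w" "shift_id_rel_ectx E E'" "shift_id_rel r w"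
    using assms(2) shift_id_rel_plugE_leftD by blast
  moreover obtain w' where "contr w w'" "shift_id_rel r' w'"
    using contr_simulation red(2) w(3) by blast
  ultimately show ?thesis
    using red red_iff_plugE_contr shift_id_rel_ectx_ok shift_id_rel_plugE by metis
qed

lemma red_simulation_rev:
  assumes "red u u'" "shift_id_rel t u"
  shows "\<exists>t'. red t t' \<and> shift_id_rel t' u'"
proof -
  obtain E' r r' where red: "ectx_ok E'" "contr r r'" "u = plugE E' r" "u' = plugE E' r'"
    using assms(1) red_iff_plugE_contr by blast
  then obtain E w where w: "t = plugE E w" "shift_id_rel_ectx E E'" "shift_id_rel w r"
    using assms(2) shift_id_rel_plugE_rightD contr_not_Shift by metis
  moreover obtain w' where "contr w w'" "shift_id_rel w' r'"
    using contr_simulation_rev red(2) w(3) by blast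
  ultimately show ?thesis
    using red red_iff_plugE_contr shift_id_rel_ectx_ok shift_id_rel_plugE by metis
qed

lemma reds_simulation:
  "red\<^sup>*\<^sup>* t t' \<Longrightarrow> shift_id_rel t u \<Longrightarrow> \<exists>u'. red\<^sup>*\<^sup>* u u' \<and> shift_id_rel t' u'"
proof (induction rule: rtranclp_induct)
  case (step t' t'')
  then obtain u' where "red\<^sup>*\<^sup>* u u'" "shift_id_rel t' u'"
    by blast
  with red_simulation[OF step(2)] show ?case
    by (meson rtranclp.rtrancl_into_rtrancl)
qed blast

lemma reds_simulation_rev:
  "red\<^sup>*\<^sup>* u u' \<Longrightarrow> shift_id_rel t u \<Longrightarrow> \<exists>t'. red\<^sup>*\<^sup>* t t' \<and> shift_id_rel t' u'"
proof (induction rule: rtranclp_induct)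
  case (step u' u'')
  then obtain t' where "red\<^sup>*\<^sup>* t t'" "shift_id_rel t' u'"
    by blast
  with red_simulation_rev[OF step(2)] show ?case
    by (meson rtranclp.rtrancl_into_rtrancl)
qed blast

lemma shift_id_rel_irreducible: "shift_id_rel t u \<Longrightarrow> irreducible t \<longleftrightarrow> irreducible u"
  unfolding irreducible_def using red_simulation red_simulation_rev by blast

lemma shift_id_rel_control_stuck:
  assumes "shift_id_rel t u"
  shows "control_stuck t \<longleftrightarrow> control_stuck u"
proof
  assume "control_stuck t"
  then obtain F s where "pure F" "t = plugE F (Shift s)"
    unfolding control_stuck_def by blast
  with assms obtain F' r where F': "u = plugE F' r" "pure F'" "shift_id_rel (Shift s) r"
    using shift_id_rel_plugE_leftD shift_id_rel_pure by metis
  from F'(3) show "control_stuck u"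
  proof (rule shift_id_rel_ShiftE)
    fix t0 assume "r = App (Shift I_trm) t0"
    then have "u = plugE (ecomp F' (EFun EHole t0)) (Shift I_trm)"
      using F'(1) by (simp add: plugE_ecomp)
    then show ?thesis
      unfolding control_stuck_def using F'(2) by (metis pure.simps(1,3) pure_ecomp)
  qed (use F' in \<open>auto simp: control_stuck_def\<close>)
next
  assume "control_stuck u"
  then obtain F' s' where "pure F'" "u = plugE F' (Shift s')"
    unfolding control_stuck_def by blast
  then show "control_stuck t"
    using shift_id_rel_pure_shift_rightD assms shift_id_rel_pure
    unfolding control_stuck_def by metis
qed

lemma shift_id_rel_observations:
  assumes "shift_id_rel t u"
  shows "((\<exists>v. evals t v \<and> is_val v) \<longleftrightarrow> (\<exists>v. evals u v \<and> is_val v))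
       \<and> ((\<exists>v. evals t v \<and> control_stuck v) \<longleftrightarrow> (\<exists>v. evals u v \<and> control_stuck v))"
  unfolding evals_def
  using reds_simulation[OF _ assms] reds_simulation_rev[OF _ assms]
    shift_id_rel_irreducible shift_id_rel_is_val shift_id_rel_control_stuck
  by metis

lemma ctx_equiv_Shift_I_App: "ctx_equiv (Shift I_trm) (App (Shift I_trm) u)"
proof -
  have "shift_id_rel (plugC C (Shift I_trm)) (plugC C (App (Shift I_trm) u))" for C
    by (induction C) (auto intro: shift_id_rel.intros shift_id_rel_refl)
  then show ?thesis
    unfolding ctx_equiv_def using shift_id_rel_observations by blast
qed

lemma plugE_contr_App_Var_Omega:
  assumes "plugE E r = App (Var x) Omega" "contr r r'"
  shows "r = Omega \<and> r' = Omega"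
proof -
  have not_Lam_Var: "plugE E' r \<noteq> Lam t" "plugE E' r \<noteq> Var y" for E' t y
    using assms(2) plugE_eq_Lam plugE_eq_Var by (fastforce elim: contr.cases)+
  show ?thesis
  proof (cases E)
    case (EArgV v E2)
    then show ?thesis
      using assms not_Lam_Var
      by (cases E2) (auto simp: Omega_def elim: contr.cases)
  qed (use assms not_Lam_Var in \<open>auto simp: Omega_def elim: contr.cases\<close>)
qed

lemma red_App_Var_Omega: "red (App (Var x) Omega) u \<longleftrightarrow> u = App (Var x) Omega"
proof
  assume "red (App (Var x) Omega) u"
  then obtain E r r' where "App (Var x) Omega = plugE E r" "contr r r'" "u = plugE E r'"
    unfolding red_iff_plugE_contr by blast
  then show "u = App (Var x) Omega"
    using plugE_contr_App_Var_Omega by metis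
next
  have "contr Omega Omega"
    unfolding Omega_def using contr.beta[of "Lam (App (Var 0) (Var 0))" "App (Var 0) (Var 0)"]
    by simp
  then show "u = App (Var x) Omega \<Longrightarrow> red (App (Var x) Omega) u"
    using red_iff_plugE_contr[of _ u] by (metis ectx_ok.simps(1,2) is_val.simps(1) plugE.simps(1,2))
qed

lemma not_evals_App_Var_Omega: "\<not> evals (App (Var x) Omega) t"
proof -
  have "red\<^sup>*\<^sup>* (App (Var x) Omega) t \<Longrightarrow> t = App (Var x) Omega"
    by (induction rule: rtranclp_induct) (auto simp: red_App_Var_Omega)
  then show ?thesis
    unfolding evals_def irreducible_def using red_App_Var_Omega by blast
qed

lemma irreducible_Var: "irreducible (Var x)"
  unfolding irreducible_def red_iff_plugE_contr by (auto dest!: plugE_eq_Var[OF sym] elim: contr.cases)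

lemma irreducible_Shift: "irreducible (Shift s)"
  unfolding irreducible_def red_iff_plugE_contr by (auto dest!: plugE_eq_Shift[OF sym] contr_not_Shift)

lemma evals_irreducible: "irreducible t \<Longrightarrow> evals t u \<longleftrightarrow> u = t"
  unfolding evals_def irreducible_def by (metis converse_rtranclpE rtranclp.rtrancl_refl)

lemma nf_rel_Shift_App_ShiftD:
  assumes "nf_rel R (Shift s) (App (Shift s') u)"
  shows "R (Var 0) (App (Var 0) (lift 0 u))"
proof -
  have "\<nexists>E x v. Shift s = plugE E (App (Var x) v)"
    using plugE_eq_Shift[OF sym] by blast
  then obtain F0 F1 s0 s1 where F:
    "pure F1" "Shift s = plugE F0 (Shift s0)" "App (Shift s') u = plugE F1 (Shift s1)"
    "ctx_rel R F0 F1"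
    using assms unfolding nf_rel_def by fastforce
  have "F0 = EHole"
    using F(2) plugE_eq_Shift by metis
  moreover have "F1 = EFun EHole u"
    using F(1,3) by (cases F1) (auto dest: plugE_eq_Shift[OF sym])
  moreover have "EHole \<noteq> ecomp E (EReset F)" for E F
    by (cases E) auto
  ultimately show ?thesis
    using F(4) unfolding ctx_rel_def by auto
qed

lemma not_nf_sim_Shift_I_App_Omega:
  assumes "nf_sim R"
  shows "\<not> R (Shift I_trm) (App (Shift I_trm) Omega)"
proof
  assume "R (Shift I_trm) (App (Shift I_trm) Omega)"
  moreover have "irreducible (App (Shift I_trm) Omega)"
    using shift_id_rel_irreducible[OF shift_id_rel.shift_id_app] irreducible_Shift by blast
  ultimately have "R (Var 0) (App (Var 0) Omega)"
    using assms irreducible_Shift nf_rel_Shift_App_ShiftD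
    unfolding nf_sim_def by (metis evals_irreducible lift_Omega)
  then show False
    using assms irreducible_Var not_evals_App_Var_Omega
    unfolding nf_sim_def by (metis evals_irreducible)
qed

theorem proposition2:
  shows "ctx_equiv (Shift I_trm) (App (Shift I_trm) Omega)
       \<and> \<not> nf_bisimilar (Shift I_trm) (App (Shift I_trm) Omega)"
  using ctx_equiv_Shift_I_App not_nf_sim_Shift_I_App_Omega
  unfolding nf_bisimilar_def nf_bisim_def by blast

end
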